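(* Let $m,n$ be relatively prime positive integers and $\pi$ an $(m,n)$-Dyck path. Then \[ \sum_{p\in v_*(\pi)} k(p) \;=\; \sum_{p\in v^*(\pi)} k(p). \]
   Context: An $(m,n)$-Dyck path is a lattice path from $(0,0)$ to $(m,n)$ with steps $(1,0)$ (horizontal) and $(0,1)$ (vertical) staying weakly above the diagonal $y=\frac nm x$. "The line through a point $p$" means the line through $p$ parallel to the diagonal. For a lattice point $p$, $k(p)$ is the number of vertical steps of $\pi$ not containing $p$ that the line through $p$ intersects. An outer vertex of $\pi$ is a vertex where a vertical step is followed by a horizontal step, an internal vertex one where a horizontal step is followed by a vertical step; $v^*(\pi)$ is the set of outer vertices except the one farthest from the diagonal, and $v_*(\pi)$ is the set of internal vertices. *)

theory Defs
  imports Main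
begin

text \<open>A lattice path is encoded as a list of steps: True = vertical step (0,1),
  False = horizontal step (1,0). The i-th vertex (0 \<le> i \<le> length) is the
  point reached after the first i steps.\<close>

definition vtx :: "bool list \<Rightarrow> nat \<Rightarrow> int \<times> int" where
  "vtx \<pi> i = (int (length (filter Not (take i \<pi>))), int (length (filter id (take i \<pi>))))"

definition dyck_path :: "nat \<Rightarrow> nat \<Rightarrow> bool list \<Rightarrow> bool" where
  "dyck_path m n \<pi> \<longleftrightarrow> vtx \<pi> (length \<pi>) = (int m, int n) \<and>
     (\<forall>i \<le> length \<pi>. int n * fst (vtx \<pi> i) \<le> int m * snd (vtx \<pi> i))"

text \<open>The line through p parallel to the diagonal is {(x,y). m*y - n*x = lv m n p}.\<close>
definition lv :: "nat \<Rightarrow> nat \<Rightarrow> int \<times> int \<Rightarrow> int" where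
  "lv m n p = int m * snd p - int n * fst p"

text \<open>The vertical step i (with \<pi>!i = True) is the closed segment from vtx \<pi> i
  to vtx \<pi> (i+1).\<close>
definition step_contains :: "bool list \<Rightarrow> nat \<Rightarrow> int \<times> int \<Rightarrow> bool" where
  "step_contains \<pi> i p \<longleftrightarrow> fst p = fst (vtx \<pi> i) \<and>
     snd (vtx \<pi> i) \<le> snd p \<and> snd p \<le> snd (vtx \<pi> i) + 1"

definition line_meets_step :: "nat \<Rightarrow> nat \<Rightarrow> bool list \<Rightarrow> nat \<Rightarrow> int \<times> int \<Rightarrow> bool" where
  "line_meets_step m n \<pi> i p \<longleftrightarrow>
     lv m n (vtx \<pi> i) \<le> lv m n p \<and> lv m n p \<le> lv m n (vtx \<pi> (Suc i))"

text \<open>k(p): number of vertical steps not containing p met by the line through p.\<close>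
definition kval :: "nat \<Rightarrow> nat \<Rightarrow> bool list \<Rightarrow> int \<times> int \<Rightarrow> nat" where
  "kval m n \<pi> p = card {i. i < length \<pi> \<and> \<pi> ! i \<and> \<not> step_contains \<pi> i p \<and>
                         line_meets_step m n \<pi> i p}"

definition outer_vertices :: "bool list \<Rightarrow> (int \<times> int) set" where
  "outer_vertices \<pi> = {vtx \<pi> j | j. 0 < j \<and> j < length \<pi> \<and> \<pi> ! (j - 1) \<and> \<not> \<pi> ! j}"

definition internal_vertices :: "bool list \<Rightarrow> (int \<times> int) set" where
  "internal_vertices \<pi> = {vtx \<pi> j | j. 0 < j \<and> j < length \<pi> \<and> \<not> \<pi> ! (j - 1) \<and> \<pi> ! j}"

text \<open>v^*: outer vertices except the one farthest from the diagonal
  (distance is proportional to lv).\<close>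
definition outer_vertices_star :: "nat \<Rightarrow> nat \<Rightarrow> bool list \<Rightarrow> (int \<times> int) set" where
  "outer_vertices_star m n \<pi> =
     outer_vertices \<pi> - {arg_max_on (lv m n) (outer_vertices \<pi>)}"

end

theory Submission
  imports Defs
begin

text \<open>Measure the distance of a lattice point (x, y) from the diagonal by its level m y - n x.
  Since m and n are coprime, two lattice points of the rectangle with the same level coincide
  unless they are its two corners. Hence the line through an interior vertex p of \<pi> meets a
  vertical step away from p exactly when the level of p lies strictly inside the level interval
  (l, l + m) swept by that step; call the number of such steps F(p). Summation by parts turns the
  difference of the sums of F over internal and outer vertices into the sum of F(v) - F(v')
  over the vertical steps from v to v'. This vanishes, since both sums count the ordered pairs of
  vertical steps whose level intervals properly overlap. Finally the line through the outer
  vertex of maximal level meets no step at all.\<close>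

lemma vtx_0 [simp]: "vtx \<pi> 0 = (0, 0)"
  by (simp add: vtx_def)

lemma vtx_Suc:
  "j < length \<pi> \<Longrightarrow> vtx \<pi> (Suc j) =
     (if \<pi> ! j then (fst (vtx \<pi> j), snd (vtx \<pi> j) + 1) else (fst (vtx \<pi> j) + 1, snd (vtx \<pi> j)))"
  by (simp add: vtx_def take_Suc_conv_app_nth)

lemma fst_plus_snd_vtx: "j \<le> length \<pi> \<Longrightarrow> fst (vtx \<pi> j) + snd (vtx \<pi> j) = int j"
  using sum_length_filter_compl[of id "take j \<pi>"] by (simp add: vtx_def)

lemma inj_on_vtx: "inj_on (vtx \<pi>) {..length \<pi>}"
  by (rule inj_onI) (metis atMost_iff fst_plus_snd_vtx of_nat_eq_iff)

lemma vtx_le_vtx_length: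
  "fst (vtx \<pi> j) \<le> fst (vtx \<pi> (length \<pi>)) \<and> snd (vtx \<pi> j) \<le> snd (vtx \<pi> (length \<pi>))"
proof -
  have "length (filter P (take j \<pi>)) \<le> length (filter P \<pi>)" for P
    by (metis append_take_drop_id filter_append length_append le_add1)
  then show ?thesis by (simp add: vtx_def)
qed

lemma step_contains_iff:
  assumes "i < length \<pi>" "\<pi> ! i"
  shows "step_contains \<pi> i p \<longleftrightarrow> p = vtx \<pi> i \<or> p = vtx \<pi> (Suc i)"
proof -
  have "snd (vtx \<pi> i) \<le> snd p \<and> snd p \<le> snd (vtx \<pi> i) + 1 \<longleftrightarrow>
        snd p = snd (vtx \<pi> i) \<or> snd p = snd (vtx \<pi> i) + 1"
    by linarith
  then show ?thesis
    using vtx_Suc[OF assms(1)] assms(2) by (cases p) (auto simp: step_contains_def prod_eq_iff)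
qed

section \<open>Levels of lattice points\<close>

lemma lv_Pair [simp]: "lv m n (x, y) = int m * y - int n * x"
  by (simp add: lv_def)

lemma lv_eq_in_box:
  assumes "coprime m n" "0 < m"
    and "p \<in> {0..int m} \<times> {0..int n}" "q \<in> {0..int m} \<times> {0..int n}"
    and "lv m n p = lv m n q" "p \<notin> {(0, 0), (int m, int n)}"
  shows "p = q"
proof -
  obtain x y x' y' where pq: "p = (x, y)" "q = (x', y')" by fastforce
  have eq: "int m * (y - y') = int n * (x - x')"
    using assms(5) by (simp add: pq algebra_simps)
  then have "int m dvd x - x'"
    using assms(1) by (metis coprime_dvd_mult_right_iff coprime_int_iff dvd_triv_left)
  then obtain c where c: "x - x' = int m * c" by blast
  have "\<bar>int m * c\<bar> \<le> int m"
    using assms(3,4) c pq by auto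
  then have c_bound: "\<bar>c\<bar> \<le> 1"
    using assms(2) by (simp add: abs_mult)
  have "int m * (y - y') = int m * (int n * c)"
    using eq c by (simp add: algebra_simps)
  then have y: "y - y' = int n * c"
    using assms(2) by simp
  from c_bound consider "c = 0" | "c = 1" | "c = -1"
    by linarith
  then show ?thesis
    using assms(3,4,6) c y pq by cases auto
qed

section \<open>Crossing counts of level intervals\<close>

definition crossings :: "('i \<Rightarrow> int) \<Rightarrow> int \<Rightarrow> 'i set \<Rightarrow> int \<Rightarrow> nat" where
  "crossings g c U t = card {i \<in> U. g i < t \<and> t < g i + c}"

lemma sum_crossings_shift:
  assumes "finite U"
  shows "(\<Sum>k\<in>U. crossings g c U (g k)) = (\<Sum>k\<in>U. crossings g c U (g k + c))"
proof -
  let ?A = "SIGMA k:U. {i \<in> U. g i < g k \<and> g k < g i + c}"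
  let ?B = "SIGMA k:U. {i \<in> U. g i < g k + c \<and> g k + c < g i + c}"
  have "?B = prod.swap ` ?A"
    by (auto simp: image_iff)
  then have "card ?B = card ?A"
    by (simp add: card_image)
  then show ?thesis
    using assms by (simp add: crossings_def)
qed

lemma crossings_eq_0_below:
  "(\<And>i. i \<in> U \<Longrightarrow> t \<le> g i) \<Longrightarrow> crossings g c U t = 0"
  unfolding crossings_def by (metis (mono_tags, lifting) card.empty empty_Collect_eq not_less)

lemma crossings_eq_0_above:
  "(\<And>i. i \<in> U \<Longrightarrow> g i + c \<le> t) \<Longrightarrow> crossings g c U t = 0"
  unfolding crossings_def by (metis (mono_tags, lifting) card.empty empty_Collect_eq not_less)

section \<open>Up steps, valleys and peaks of a step word\<close>

definition up_steps :: "bool list \<Rightarrow> nat set" where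
  "up_steps w = {i. i < length w \<and> w ! i}"

definition valleys :: "bool list \<Rightarrow> nat set" where
  "valleys w = {j. 0 < j \<and> j < length w \<and> \<not> w ! (j - 1) \<and> w ! j}"

definition peaks :: "bool list \<Rightarrow> nat set" where
  "peaks w = {j. 0 < j \<and> j < length w \<and> w ! (j - 1) \<and> \<not> w ! j}"

lemma internal_vertices_eq: "internal_vertices \<pi> = vtx \<pi> ` valleys \<pi>"
  unfolding internal_vertices_def valleys_def by blast

lemma outer_vertices_eq: "outer_vertices \<pi> = vtx \<pi> ` peaks \<pi>"
  unfolding outer_vertices_def peaks_def by blast

text \<open>Discrete summation by parts: the runs of up steps start at valleys and end at peaks
  (or at the endpoints of the word, where F vanishes).\<close>

lemma sum_up_steps_plus_peaks:
  fixes F :: "nat \<Rightarrow> 'a::comm_monoid_add"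
  assumes "F 0 = 0" "F (length w) = 0"
  shows "(\<Sum>j\<in>up_steps w. F j) + (\<Sum>j\<in>peaks w. F j) =
         (\<Sum>j\<in>up_steps w. F (Suc j)) + (\<Sum>j\<in>valleys w. F j)"
proof -
  define B where "B = {j. 0 < j \<and> j < length w \<and> w ! (j - 1) \<and> w ! j}"
  have fin: "finite B" "finite (valleys w)" "finite (peaks w)"
    by (auto simp: B_def valleys_def peaks_def)
  have "(\<Sum>j\<in>up_steps w. F j) = (\<Sum>j\<in>B \<union> valleys w. F j)"
    using assms(1) by (intro sum.mono_neutral_right)
      (auto simp: up_steps_def B_def valleys_def)
  also have "\<dots> = (\<Sum>j\<in>B. F j) + (\<Sum>j\<in>valleys w. F j)"
    using fin by (intro sum.union_disjoint) (auto simp: B_def valleys_def)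
  finally have up:
    "(\<Sum>j\<in>up_steps w. F j) = (\<Sum>j\<in>B. F j) + (\<Sum>j\<in>valleys w. F j)" .
  have "(\<Sum>j\<in>up_steps w. F (Suc j)) = (\<Sum>j\<in>Suc ` up_steps w. F j)"
    by (simp add: sum.reindex)
  also have "\<dots> = (\<Sum>j\<in>B \<union> peaks w. F j)"
  proof (rule sum.mono_neutral_right)
    show "finite (Suc ` up_steps w)"
      by (simp add: up_steps_def)
    show "B \<union> peaks w \<subseteq> Suc ` up_steps w"
    proof
      fix j assume "j \<in> B \<union> peaks w"
      then have "j = Suc (j - 1)" "j - 1 \<in> up_steps w"
        by (auto simp: B_def peaks_def up_steps_def)
      then show "j \<in> Suc ` up_steps w"
        by (metis imageI)
    qed
    show "\<forall>j\<in>Suc ` up_steps w - (B \<union> peaks w). F j = 0"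
    proof
      fix j assume "j \<in> Suc ` up_steps w - (B \<union> peaks w)"
      then obtain i where "j = Suc i" "i < length w" "w ! i" "j \<notin> B" "j \<notin> peaks w"
        by (auto simp: up_steps_def)
      then have "j = length w"
        unfolding B_def peaks_def by (cases "j < length w") auto
      then show "F j = 0"
        using assms(2) by simp
    qed
  qed
  also have "\<dots> = (\<Sum>j\<in>B. F j) + (\<Sum>j\<in>peaks w. F j)"
    using fin by (intro sum.union_disjoint) (auto simp: B_def peaks_def)
  finally have shifted:
    "(\<Sum>j\<in>up_steps w. F (Suc j)) = (\<Sum>j\<in>B. F j) + (\<Sum>j\<in>peaks w. F j)" .
  show ?thesis
    unfolding up shifted by (simp add: ac_simps)
qed

locale coprime_dyck_path =
  fixes m n :: nat and \<pi> :: "bool list"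
  assumes m_pos: "0 < m" and n_pos: "0 < n" and coprime: "coprime m n"
    and dyck: "dyck_path m n \<pi>"
begin

abbreviation level :: "nat \<Rightarrow> int" where
  "level j \<equiv> lv m n (vtx \<pi> j)"

abbreviation vertex_crossings :: "nat \<Rightarrow> nat" where
  "vertex_crossings j \<equiv> crossings level (int m) (up_steps \<pi>) (level j)"

lemma vtx_length: "vtx \<pi> (length \<pi>) = (int m, int n)"
  using dyck by (simp add: dyck_path_def)

lemma length_eq: "length \<pi> = m + n"
  using fst_plus_snd_vtx[of "length \<pi>" \<pi>] vtx_length by simp

lemma vtx_in_box: "vtx \<pi> j \<in> {0..int m} \<times> {0..int n}"
  using vtx_le_vtx_length[of \<pi> j] vtx_length by (auto simp: vtx_def mem_Times_iff)

lemma level_nonneg: "j \<le> length \<pi> \<Longrightarrow> 0 \<le> level j"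
  using dyck by (simp add: dyck_path_def lv_def)

lemma level_length: "level (length \<pi>) = 0"
  by (simp add: vtx_length)

lemma level_Suc:
  "j < length \<pi> \<Longrightarrow> level (Suc j) = (if \<pi> ! j then level j + int m else level j - int n)"
  using vtx_Suc[of j \<pi>] by (cases "vtx \<pi> j") (auto simp: algebra_simps)

lemma level_eq_iff_vtx_eq:
  assumes "i \<le> length \<pi>" "0 < j" "j < length \<pi>"
  shows "level i = level j \<longleftrightarrow> vtx \<pi> i = vtx \<pi> j"
proof
  have "vtx \<pi> j \<notin> {(0, 0), (int m, int n)}"
    using fst_plus_snd_vtx[of j \<pi>] assms(2,3) length_eq by auto
  then show "level i = level j \<Longrightarrow> vtx \<pi> i = vtx \<pi> j"
    using lv_eq_in_box[OF coprime m_pos vtx_in_box vtx_in_box] by metis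
qed simp

lemma kval_vtx:
  assumes "0 < j" "j < length \<pi>"
  shows "kval m n \<pi> (vtx \<pi> j) = vertex_crossings j"
proof -
  have "\<not> step_contains \<pi> i (vtx \<pi> j) \<and> line_meets_step m n \<pi> i (vtx \<pi> j) \<longleftrightarrow>
        level i < level j \<and> level j < level i + int m"
    if i: "i < length \<pi>" "\<pi> ! i" for i
  proof -
    have up: "level (Suc i) = level i + int m"
      using level_Suc[of i] i by simp
    have "step_contains \<pi> i (vtx \<pi> j) \<longleftrightarrow> vtx \<pi> i = vtx \<pi> j \<or> vtx \<pi> (Suc i) = vtx \<pi> j"
      using step_contains_iff[OF i] by auto
    also have "\<dots> \<longleftrightarrow> level i = level j \<or> level (Suc i) = level j"
      using level_eq_iff_vtx_eq[of i j] level_eq_iff_vtx_eq[of "Suc i" j] i assms by simp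
    finally show ?thesis
      using up by (auto simp: line_meets_step_def)
  qed
  then have "{i. i < length \<pi> \<and> \<pi> ! i \<and> \<not> step_contains \<pi> i (vtx \<pi> j) \<and>
                line_meets_step m n \<pi> i (vtx \<pi> j)} =
             {i \<in> up_steps \<pi>. level i < level j \<and> level j < level i + int m}"
    by (auto simp: up_steps_def)
  then show ?thesis
    by (simp add: kval_def crossings_def)
qed

lemma sum_kval_vtx_image:
  assumes "J \<subseteq> {0<..<length \<pi>}"
  shows "(\<Sum>p\<in>vtx \<pi> ` J. kval m n \<pi> p) = (\<Sum>j\<in>J. vertex_crossings j)"
proof -
  have "inj_on (vtx \<pi>) J"
    by (rule inj_on_subset[OF inj_on_vtx]) (use assms in auto)
  then show ?thesis
    using assms by (simp add: sum.reindex kval_vtx subset_iff)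
qed

lemma vertex_crossings_endpoints: "vertex_crossings 0 = 0" "vertex_crossings (length \<pi>) = 0"
  using level_nonneg by (auto simp: level_length up_steps_def intro!: crossings_eq_0_below)

lemma sum_vertex_crossings_valleys_eq_peaks:
  "(\<Sum>j\<in>valleys \<pi>. vertex_crossings j) = (\<Sum>j\<in>peaks \<pi>. vertex_crossings j)"
proof -
  have "(\<Sum>j\<in>up_steps \<pi>. vertex_crossings (Suc j)) = (\<Sum>j\<in>up_steps \<pi>. vertex_crossings j)"
    using sum_crossings_shift[of "up_steps \<pi>" level "int m"]
    by (simp add: up_steps_def level_Suc)
  then show ?thesis
    using sum_up_steps_plus_peaks[of vertex_crossings \<pi>, OF vertex_crossings_endpoints] by simp
qed

lemma peak_of_maximal_level:
  obtains j0 where "j0 \<in> peaks \<pi>" "\<And>j. j \<le> length \<pi> \<Longrightarrow> level j \<le> level j0"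
proof -
  obtain j0 where j0: "j0 \<le> length \<pi>" and max: "\<And>j. j \<le> length \<pi> \<Longrightarrow> level j \<le> level j0"
    using Max_in[of "level ` {..length \<pi>}"] Max_ge[of "level ` {..length \<pi>}"] by fastforce
  have len: "0 < length \<pi>"
    using length_eq m_pos by simp
  have level_1: "level 1 = (if \<pi> ! 0 then int m else - int n)"
    using level_Suc[OF len] by simp
  have "\<pi> ! 0"
  proof (rule ccontr)
    assume "\<not> \<pi> ! 0"
    then show False
      using level_1 level_nonneg[of 1] len n_pos by simp
  qed
  then have "0 < level j0"
    using max[of 1] level_1 len m_pos by simp
  have "j0 \<noteq> 0"
  proof
    assume "j0 = 0"
    then show False
      using \<open>0 < level j0\<close> by simp
  qed
  moreover have "j0 \<noteq> length \<pi>"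
    using \<open>0 < level j0\<close> level_length by auto
  ultimately have j0_range: "0 < j0" "j0 < length \<pi>"
    using j0 by auto
  have "\<pi> ! (j0 - 1)"
  proof (rule ccontr)
    assume "\<not> \<pi> ! (j0 - 1)"
    then have "level j0 = level (j0 - 1) - int n"
      using level_Suc[of "j0 - 1"] j0_range by simp
    moreover have "level (j0 - 1) \<le> level j0"
      using j0_range by (intro max) simp
    ultimately show False
      using n_pos by simp
  qed
  moreover have "\<not> \<pi> ! j0"
  proof
    assume "\<pi> ! j0"
    then have "level (Suc j0) = level j0 + int m"
      using level_Suc[of j0] j0_range by simp
    then show False
      using max[of "Suc j0"] j0_range m_pos by simp
  qed
  ultimately show ?thesis
    using that max j0_range by (auto simp: peaks_def)
qed

lemma sum_kval_outer_vertices_star: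
  "(\<Sum>p\<in>outer_vertices_star m n \<pi>. kval m n \<pi> p) = (\<Sum>p\<in>outer_vertices \<pi>. kval m n \<pi> p)"
proof -
  define a where "a = arg_max_on (lv m n) (outer_vertices \<pi>)"
  obtain j0 where j0: "j0 \<in> peaks \<pi>" and max: "\<And>j. j \<le> length \<pi> \<Longrightarrow> level j \<le> level j0"
    using peak_of_maximal_level by blast
  have "kval m n \<pi> a = 0" if a_outer: "a \<in> outer_vertices \<pi>"
  proof -
    obtain ja where ja: "ja \<in> peaks \<pi>" "a = vtx \<pi> ja"
      using a_outer outer_vertices_eq by auto
    have a_level: "lv m n a = level j0"
      unfolding a_def arg_max_on_def
    proof (rule arg_max_equality)
      show "vtx \<pi> j0 \<in> outer_vertices \<pi>"
        using j0 outer_vertices_eq by auto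
    next
      fix p assume "p \<in> outer_vertices \<pi>"
      then show "lv m n p \<le> level j0"
        using max by (auto simp: outer_vertices_eq peaks_def)
    qed
    have "vertex_crossings ja = 0"
    proof (rule crossings_eq_0_above)
      fix i assume i: "i \<in> up_steps \<pi>"
      then have "level i + int m = level (Suc i)"
        by (simp add: up_steps_def level_Suc)
      also have "\<dots> \<le> level ja"
        using max[of "Suc i"] a_level ja i by (simp add: up_steps_def level_Suc)
      finally show "level i + int m \<le> level ja" .
    qed
    then show ?thesis
      using ja kval_vtx by (auto simp: peaks_def)
  qed
  then show ?thesis
    unfolding outer_vertices_star_def a_def[symmetric] by (simp add: sum_diff1_nat)
qed

end

theorem mainTheorem4:
  fixes m n :: nat and \<pi> :: "bool list"
  assumes "0 < m" and "0 < n" and "coprime m n"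
    and "dyck_path m n \<pi>"
  shows "(\<Sum>p\<in>internal_vertices \<pi>. kval m n \<pi> p) =
         (\<Sum>p\<in>outer_vertices_star m n \<pi>. kval m n \<pi> p)"
proof -
  interpret coprime_dyck_path m n \<pi>
    using assms by unfold_locales
  have "(\<Sum>p\<in>internal_vertices \<pi>. kval m n \<pi> p) = (\<Sum>j\<in>valleys \<pi>. vertex_crossings j)"
    unfolding internal_vertices_eq by (rule sum_kval_vtx_image) (auto simp: valleys_def)
  also have "\<dots> = (\<Sum>j\<in>peaks \<pi>. vertex_crossings j)"
    by (rule sum_vertex_crossings_valleys_eq_peaks)
  also have "\<dots> = (\<Sum>p\<in>outer_vertices \<pi>. kval m n \<pi> p)"
    unfolding outer_vertices_eq by (rule sum_kval_vtx_image[symmetric]) (auto simp: peaks_def)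
  also have "\<dots> = (\<Sum>p\<in>outer_vertices_star m n \<pi>. kval m n \<pi> p)"
    by (rule sum_kval_outer_vertices_star[symmetric])
  finally show ?thesis .
qed

end
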